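(* Let $\mathbb{K}$ be a field of characteristic $0$ and let $L=\sum_{i=0}^{J}a_i(n)\sigma^i$, $a_i(n)\in\mathbb{K}[n]$, be nondegenerated. Then the continued zero index $C_L=0$.
   Context: $\sigma$ is the shift operator. The adjoint of $L$ acts on polynomials by $L^*(x(n))=\sum_{i=0}^J a_i(n-i)x(n-i)$. Put $b_k(n)=\sum_{j=k}^{J}\binom{j}{k}a_{J-j}(n+j-J)$ for $0\le k\le J$, $d=\deg L=\max_{0\le k\le J}\{\deg b_k(n)-k\}$, and $f(s)=\sum_{k=0}^{J}[n^{d+k}](b_k(n))\,s^{\underline{k}}$, where $[n^m](b)$ is the coefficient of $n^m$ in $b$ and $s^{\underline{k}}=s(s-1)\cdots(s-k+1)$. Let $R_L=\{s\in\mathbb{N}=\{0,1,2,\dots\}: f(s)=0\}$. $L$ is degenerated if $R_L\ne\emptyset$ and nondegenerated otherwise. Continued zero index $C_L$: if $L^*(1)\neq0$ then $C_L=0$; if $L^*(1)=0$ then $C_L$ is the positive integer with $L^*(n^{C_L})\neq 0$ and $L^*(n^i)=0$ for $0\le i\le C_L-1$. *)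

theory Defs
  imports "HOL-Computational_Algebra.Polynomial"
begin

text \<open>The operator L = sum_{i=0}^J a_i(n) sigma^i is given by its coefficient
  polynomials a 0, ..., a J.\<close>

definition shiftp :: "'a::comm_ring_1 \<Rightarrow> 'a poly \<Rightarrow> 'a poly" where
  "shiftp c p = pcompose p [:c, 1:]"

definition L_adj :: "(nat \<Rightarrow> 'a::comm_ring_1 poly) \<Rightarrow> nat \<Rightarrow> 'a poly \<Rightarrow> 'a poly" where
  "L_adj a J x = (\<Sum>i\<le>J. shiftp (- of_nat i) (a i * x))"

definition bcoef :: "(nat \<Rightarrow> 'a::comm_ring_1 poly) \<Rightarrow> nat \<Rightarrow> nat \<Rightarrow> 'a poly" where
  "bcoef a J k = (\<Sum>j=k..J. of_nat (j choose k) * shiftp (- of_nat (J - j)) (a (J - j)))"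

text \<open>deg L = max_k (deg b_k - k), where the zero polynomial has degree -infinity
  (so zero b_k are ignored).\<close>
definition degL :: "(nat \<Rightarrow> 'a::comm_ring_1 poly) \<Rightarrow> nat \<Rightarrow> int" where
  "degL a J = Max {int (degree (bcoef a J k)) - int k | k. k \<le> J \<and> bcoef a J k \<noteq> 0}"

definition coeff_int :: "'a::zero poly \<Rightarrow> int \<Rightarrow> 'a" where
  "coeff_int p m = (if m < 0 then 0 else coeff p (nat m))"

definition falling :: "'a::comm_ring_1 \<Rightarrow> nat \<Rightarrow> 'a" where
  "falling s k = (\<Prod>i<k. s - of_nat i)"

definition indicial :: "(nat \<Rightarrow> 'a::comm_ring_1 poly) \<Rightarrow> nat \<Rightarrow> 'a \<Rightarrow> 'a" where
  "indicial a J s = (\<Sum>k\<le>J. coeff_int (bcoef a J k) (degL a J + int k) * falling s k)"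

definition R_L :: "(nat \<Rightarrow> 'a::comm_ring_1 poly) \<Rightarrow> nat \<Rightarrow> nat set" where
  "R_L a J = {s. indicial a J (of_nat s) = 0}"

definition nondegenerated :: "(nat \<Rightarrow> 'a::comm_ring_1 poly) \<Rightarrow> nat \<Rightarrow> bool" where
  "nondegenerated a J \<longleftrightarrow> R_L a J = {}"

definition cont_zero_index :: "(nat \<Rightarrow> 'a::comm_ring_1 poly) \<Rightarrow> nat \<Rightarrow> nat" where
  "cont_zero_index a J = (if L_adj a J 1 \<noteq> 0 then 0 else
     (LEAST c. 0 < c \<and> L_adj a J (monom 1 c) \<noteq> 0 \<and> (\<forall>i<c. L_adj a J (monom 1 i) = 0)))"

end

theory Submission
  imports Defs
begin

text \<open>Only the k = 0 term of the indicial polynomial survives at s = 0, and it is a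
  coefficient of b_0 = L*(1). So L*(1) = 0 would make 0 a root in R_L.\<close>

lemma falling_zero: "falling (0::'a::comm_ring_1) k = (if k = 0 then 1 else 0)"
  by (cases k) (simp_all add: falling_def lessThan_Suc_eq_insert_0)

lemma bcoef_0_eq_L_adj_1:
  fixes a :: "nat \<Rightarrow> 'a::comm_ring_1 poly"
  shows "bcoef a J 0 = L_adj a J 1"
proof -
  have "bcoef a J 0 = (\<Sum>j=0..J. shiftp (- of_nat (J - j)) (a (J - j)))"
    by (simp add: bcoef_def)
  also have "\<dots> = (\<Sum>i=0..J. shiftp (- of_nat i) (a i))"
    by (rule sum.reindex_bij_witness[where i="\<lambda>i. J - i" and j="\<lambda>i. J - i"]) auto
  also have "\<dots> = L_adj a J 1"
    by (simp add: L_adj_def atLeast0AtMost)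
  finally show ?thesis .
qed

lemma indicial_at_0:
  fixes a :: "nat \<Rightarrow> 'a::comm_ring_1 poly"
  shows "indicial a J 0 = coeff_int (L_adj a J 1) (degL a J)"
proof -
  have "indicial a J 0 = (\<Sum>k\<in>{0}. coeff_int (bcoef a J k) (degL a J + int k))"
    unfolding indicial_def falling_zero
    by (rule sum.mono_neutral_cong_right) auto
  then show ?thesis
    by (simp add: bcoef_0_eq_L_adj_1)
qed

theorem lemma2p5:
  fixes a :: "nat \<Rightarrow> 'a::field_char_0 poly" and J :: nat
  assumes "nondegenerated a J"
  shows "L_adj a J 1 \<noteq> 0 \<and> cont_zero_index a J = 0"
proof -
  have "0 \<notin> R_L a J"
    using assms by (simp add: nondegenerated_def)
  then have "indicial a J 0 \<noteq> 0"
    by (simp add: R_L_def)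
  then have "L_adj a J 1 \<noteq> 0"
    by (auto simp: indicial_at_0 coeff_int_def split: if_splits)
  then show ?thesis
    by (simp add: cont_zero_index_def)
qed

end
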